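(* Let $k\ge 2$ and let $G$ be the chain graph on $\{o_1,\dots,o_{k-1}\}\cup\{c_1,\dots,c_k\}$ with $E(G)=\bigcup_{m=1}^{k-1}\{\{o_m,c_m\},\{o_m,c_{m+1}\}\}$. Let $1\le i<j\le k$, so that the client proximity is $d(c_i,c_j)=j-i$. Starting from $G$, apply successively, for $m=i,i+1,\dots,j-1$, the $\sigma_x$-measurement rule at $o_m$ with support vertex $b_0=c_{m+1}$, i.e. replace the current graph $H$ by $\tau_{c_{m+1}}\big(\tau_{o_m}(\tau_{c_{m+1}}(H))-o_m\big)$. Then these $d(c_i,c_j)$ operations are well defined (at each step $c_{m+1}$ is a neighbour of $o_m$ in the current graph) and in the resulting graph the vertices $c_i$ and $c_j$ are adjacent. Equivalently, $d(c_i,c_j)$ single-qubit $\sigma_x$-measurements on orchestrator qubits of the chain graph state create, up to local unitaries, a graph state in which $c_i$ and $c_j$ are joined by an edge.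
   Context: All graphs are finite, simple and undirected. For a graph $H=(V,E)$ and $a\in V$, $N_a=\{b:\{a,b\}\in E\}$; $\tau_a(H)$ (local complementation) toggles the edge $\{b,c\}$ for every pair of distinct $b,c\in N_a$ and leaves the other edges unchanged; $H-a$ deletes $a$ and its incident edges. Graph state: $\ket{H}=\prod_{\{a,b\}\in E}\mathrm{CZ}_{ab}\ket{+}^{\otimes|V|}$. Measurement rules (up to local unitaries): $\sigma_z$ at $a$ gives $H-a$; $\sigma_y$ at $a$ gives $\tau_a(H)-a$; $\sigma_x$ at $a$ with chosen $b_0\in N_a$ gives $\tau_{b_0}(\tau_a(\tau_{b_0}(H))-a)$. A client vertex (one of the $c$'s) is a bridge if it is adjacent to more than one orchestrator vertex (one of the $o$'s). The proximity $d(c,c')$ of two distinct clients is $1$ plus the number of bridges lying strictly between $c$ and $c'$ on a shortest $c$–$c'$ path in $G$; for the chain graph, $d(c_i,c_j)=|j-i|$. *)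

theory Defs
  imports Main
begin

text \<open>Finite simple graphs: a vertex set together with a set of edges,
each edge being a two-element subset of the vertex set.\<close>

type_synonym 'a graph = "'a set \<times> 'a set set"

definition verts :: "'a graph \<Rightarrow> 'a set" where "verts H = fst H"
definition edges :: "'a graph \<Rightarrow> 'a set set" where "edges H = snd H"

definition nbhd :: "'a graph \<Rightarrow> 'a \<Rightarrow> 'a set" where
  "nbhd H a = {b. {a, b} \<in> edges H}"

definition loc_comp :: "'a \<Rightarrow> 'a graph \<Rightarrow> 'a graph" where
  "loc_comp a H =
     (let P = {{b, c} | b c. b \<in> nbhd H a \<and> c \<in> nbhd H a \<and> b \<noteq> c}
      in (verts H, (edges H - P) \<union> (P - edges H)))"

definition del_vertex :: "'a \<Rightarrow> 'a graph \<Rightarrow> 'a graph" where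
  "del_vertex a H = (verts H - {a}, {e \<in> edges H. a \<notin> e})"

definition meas_x :: "'a \<Rightarrow> 'a \<Rightarrow> 'a graph \<Rightarrow> 'a graph" where
  "meas_x a b0 H = loc_comp b0 (del_vertex a (loc_comp a (loc_comp b0 H)))"

datatype vtx = Orch nat | Client nat

definition chain_graph :: "nat \<Rightarrow> vtx graph" where
  "chain_graph k =
     ({Orch m | m. 1 \<le> m \<and> m \<le> k - 1} \<union> {Client m | m. 1 \<le> m \<and> m \<le> k},
      (\<Union>m\<in>{1..k-1}. {{Orch m, Client m}, {Orch m, Client (Suc m)}}))"

definition after_meas :: "nat \<Rightarrow> nat \<Rightarrow> nat \<Rightarrow> vtx graph" where
  "after_meas k i m = fold (\<lambda>l H. meas_x (Orch l) (Client (Suc l)) H) [i..<m] (chain_graph k)"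

end

theory Submission
  imports Defs
begin

text \<open>
  When o_m is measured, o_m has neighbours c_i, c_{m+1} and the support c_{m+1} has neighbours
  o_m, o_{m+1}.  For a vertex a with neighbours p, b and a support b with neighbours a, q, the
  sigma_x rule deletes a, removes the edge bq and adds the edges pb and pq; if b is a leaf it
  just deletes a and adds pb.  So each measurement attaches c_{m+1} to c_i and hands the role of
  o_m over to o_{m+1}: after measuring o_i, ..., o_{m-1} the graph is the chain without these
  orchestrators, plus a star joining c_i to c_{i+1}, ..., c_m, with o_m joined to c_i and c_{m+1}.
\<close>

lemma edges_loc_comp:
  "edges (loc_comp a H) =
     sym_diff (edges H) {{b, c} | b c. b \<in> nbhd H a \<and> c \<in> nbhd H a \<and> b \<noteq> c}"
  by (simp add: loc_comp_def edges_def Let_def)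

lemma edges_del_vertex: "edges (del_vertex a H) = {e \<in> edges H. a \<notin> e}"
  by (simp add: del_vertex_def edges_def)

lemma loc_comp_nbhd_singleton:
  assumes "nbhd H a = {b}"
  shows "loc_comp a H = H"
proof -
  have no_pairs: "{{x, y} | x y. x \<in> nbhd H a \<and> y \<in> nbhd H a \<and> x \<noteq> y} = {}"
    using assms by auto
  show ?thesis
    unfolding loc_comp_def Let_def no_pairs by (simp add: verts_def edges_def)
qed

lemma edges_loc_comp_nbhd_pair:
  assumes "nbhd H a = {b, c}" "b \<noteq> c"
  shows "edges (loc_comp a H) = sym_diff (edges H) {{b, c}}"
proof -
  have "{{x, y} | x y. x \<in> nbhd H a \<and> y \<in> nbhd H a \<and> x \<noteq> y} = {{b, c}}"
    using assms by (auto simp: insert_commute)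
  then show ?thesis
    by (simp only: edges_loc_comp)
qed

lemma edges_loc_comp_nbhd_triple:
  assumes "nbhd H a = {b, c, d}" "b \<noteq> c" "b \<noteq> d" "c \<noteq> d"
  shows "edges (loc_comp a H) = sym_diff (edges H) {{b, c}, {b, d}, {c, d}}"
proof -
  have "{{x, y} | x y. x \<in> nbhd H a \<and> y \<in> nbhd H a \<and> x \<noteq> y} = {{b, c}, {b, d}, {c, d}}"
    using assms by (auto simp: insert_commute)
  then show ?thesis
    by (simp only: edges_loc_comp)
qed

lemma edges_meas_x_leaf_support:
  assumes a: "nbhd H a = {p, b}" and b: "nbhd H b = {a}" and "p \<noteq> a" "p \<noteq> b" "a \<noteq> b"
  shows "edges (meas_x a b H) = insert {p, b} {e \<in> edges H. a \<notin> e}"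
proof -
  have b_edge: "{b, x} \<in> edges H \<longleftrightarrow> x = a" for x
    using b by (auto simp: nbhd_def)
  have pb: "{p, b} \<notin> edges H"
    using b_edge[of p] \<open>p \<noteq> a\<close> by (simp add: insert_commute)
  let ?H' = "del_vertex a (loc_comp a H)"
  have H': "edges ?H' = insert {p, b} {e \<in> edges H. a \<notin> e}"
    using edges_loc_comp_nbhd_pair[OF a \<open>p \<noteq> b\<close>] pb assms(3-5)
    by (auto simp: edges_del_vertex)
  have "nbhd ?H' b = {p}"
    using b_edge assms(3-5) unfolding nbhd_def H' by (auto simp: doubleton_eq_iff)
  then show ?thesis
    using H' by (simp add: meas_x_def loc_comp_nbhd_singleton[OF b] loc_comp_nbhd_singleton)
qed

lemma edges_meas_x_path_support:
  assumes a: "nbhd H a = {p, b}" and b: "nbhd H b = {a, q}" and pq: "{p, q} \<notin> edges H"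
    and "p \<noteq> a" "p \<noteq> b" "p \<noteq> q" "a \<noteq> b" "a \<noteq> q" "b \<noteq> q"
  shows "edges (meas_x a b H) = insert {p, b} (insert {p, q} ({e \<in> edges H. a \<notin> e} - {{b, q}}))"
proof -
  have a_edge: "{a, x} \<in> edges H \<longleftrightarrow> x = p \<or> x = b" for x
    using a by (auto simp: nbhd_def)
  have b_edge: "{b, x} \<in> edges H \<longleftrightarrow> x = a \<or> x = q" for x
    using b by (auto simp: nbhd_def)
  have pb: "{p, b} \<notin> edges H"
    using b_edge[of p] \<open>p \<noteq> a\<close> \<open>p \<noteq> q\<close> by (simp add: insert_commute)
  have aq: "{a, q} \<notin> edges H"
    using a_edge[of q] \<open>p \<noteq> q\<close> \<open>b \<noteq> q\<close> by simp
  have bq: "{b, q} \<in> edges H"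
    using b_edge[of q] by simp
  let ?H1 = "loc_comp b H"
  have H1: "edges ?H1 = insert {a, q} (edges H)"
    using edges_loc_comp_nbhd_pair[OF b \<open>a \<noteq> q\<close>] aq by auto
  have "nbhd ?H1 a = {p, b, q}"
    using a_edge unfolding nbhd_def H1 by (auto simp: doubleton_eq_iff)
  then have H2: "edges (loc_comp a ?H1) =
      insert {p, b} (insert {p, q} (insert {a, q} (edges H) - {{b, q}}))"
    using edges_loc_comp_nbhd_triple[of ?H1 a p b q] H1 pb pq bq assms(4-9)
    by (auto simp: doubleton_eq_iff)
  let ?H3 = "del_vertex a (loc_comp a ?H1)"
  have H3: "edges ?H3 = insert {p, b} (insert {p, q} ({e \<in> edges H. a \<notin> e} - {{b, q}}))"
    using assms(4-9) unfolding edges_del_vertex H2 by blast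
  have "nbhd ?H3 b = {p}"
    using b_edge assms(4-9) unfolding nbhd_def H3 by (auto simp: doubleton_eq_iff)
  then show ?thesis
    using H3 by (simp add: meas_x_def loc_comp_nbhd_singleton)
qed

definition chain_edges :: "nat set \<Rightarrow> vtx set set" where
  "chain_edges L = (\<Union>l\<in>L. {{Orch l, Client l}, {Orch l, Client (Suc l)}})"

lemma chain_edges_insert:
  "chain_edges (insert l L) = {{Orch l, Client l}, {Orch l, Client (Suc l)}} \<union> chain_edges L"
  by (simp add: chain_edges_def)

lemma Orch_in_chain_edges: "e \<in> chain_edges L \<Longrightarrow> Orch l \<in> e \<Longrightarrow> l \<in> L"
  by (auto simp: chain_edges_def)

definition star_edges :: "nat \<Rightarrow> nat \<Rightarrow> vtx set set" where
  "star_edges i m = {{Client i, Client l} | l. i < l \<and> l \<le> m}"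

lemma star_edges_self: "star_edges i i = {}"
  by (simp add: star_edges_def)

lemma star_edges_Suc:
  "i \<le> m \<Longrightarrow> star_edges i (Suc m) = insert {Client i, Client (Suc m)} (star_edges i m)"
  by (auto simp: star_edges_def le_Suc_eq)

lemma Orch_notin_star_edges: "e \<in> star_edges i m \<Longrightarrow> Orch l \<notin> e"
  by (auto simp: star_edges_def)

definition measured_chain_edges :: "nat \<Rightarrow> nat \<Rightarrow> nat \<Rightarrow> vtx set set" where
  "measured_chain_edges k i m =
     chain_edges ({1..k-1} - {i..m}) \<union> star_edges i m
     \<union> (if m < k then {{Orch m, Client i}, {Orch m, Client (Suc m)}} else {})"

lemma edges_chain_graph:
  assumes "1 \<le> i" "i < k"
  shows "edges (chain_graph k) = measured_chain_edges k i i"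
proof -
  have "edges (chain_graph k) = chain_edges {1..k-1}"
    by (simp add: edges_def chain_graph_def chain_edges_def)
  also have "{1..k-1} = insert i ({1..k-1} - {i..i})"
    using assms by auto
  finally show ?thesis
    using assms by (simp only: chain_edges_insert measured_chain_edges_def star_edges_self
        if_True Un_empty_left Un_empty_right Un_commute)
qed

lemma measured_chain_edges_Suc_inner:
  assumes "i \<le> m" "Suc m < k"
  shows "insert {Client i, Client (Suc m)} (insert {Client i, Orch (Suc m)}
           ({e \<in> measured_chain_edges k i m. Orch m \<notin> e} - {{Client (Suc m), Orch (Suc m)}}))
         = measured_chain_edges k i (Suc m)"
proof -
  define L where "L = {1..k-1} - {i..Suc m}"
  have "{1..k-1} - {i..m} = insert (Suc m) L"
    using assms by (auto simp: L_def)
  then have before: "measured_chain_edges k i m =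
      {{Orch (Suc m), Client (Suc m)}, {Orch (Suc m), Client (Suc (Suc m))}} \<union>
      chain_edges L \<union> star_edges i m \<union> {{Orch m, Client i}, {Orch m, Client (Suc m)}}"
    using assms by (simp add: measured_chain_edges_def chain_edges_insert)
  have after: "measured_chain_edges k i (Suc m) =
      chain_edges L \<union> insert {Client i, Client (Suc m)} (star_edges i m) \<union>
      {{Orch (Suc m), Client i}, {Orch (Suc m), Client (Suc (Suc m))}}"
    using assms by (simp add: measured_chain_edges_def L_def star_edges_Suc)
  have "m \<notin> L" "Suc m \<notin> L"
    using assms by (auto simp: L_def)
  then have untouched: "Orch m \<notin> e \<and> e \<noteq> {Client (Suc m), Orch (Suc m)}"
    if "e \<in> chain_edges L \<union> star_edges i m" for e
    using that Orch_in_chain_edges Orch_notin_star_edges by fastforce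
  have "{e \<in> measured_chain_edges k i m. Orch m \<notin> e} - {{Client (Suc m), Orch (Suc m)}}
      = insert {Orch (Suc m), Client (Suc (Suc m))} (chain_edges L \<union> star_edges i m)"
    unfolding before using untouched by (auto simp: doubleton_eq_iff)
  then show ?thesis
    unfolding after by (auto simp: insert_commute)
qed

lemma measured_chain_edges_Suc_last:
  assumes "i \<le> m" "Suc m = k"
  shows "insert {Client i, Client (Suc m)} {e \<in> measured_chain_edges k i m. Orch m \<notin> e}
         = measured_chain_edges k i (Suc m)"
proof -
  define L where "L = {1..k-1} - {i..m}"
  have before: "measured_chain_edges k i m =
      chain_edges L \<union> star_edges i m \<union> {{Orch m, Client i}, {Orch m, Client (Suc m)}}"
    using assms by (simp add: measured_chain_edges_def L_def)
  have L_Suc: "{1..k-1} - {i..Suc m} = L"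
    using assms by (auto simp: L_def)
  have after: "measured_chain_edges k i (Suc m) =
      chain_edges L \<union> insert {Client i, Client (Suc m)} (star_edges i m)"
    unfolding measured_chain_edges_def star_edges_Suc[OF \<open>i \<le> m\<close>] L_Suc using assms by simp
  have "m \<notin> L"
    using assms by (auto simp: L_def)
  then have "{e \<in> measured_chain_edges k i m. Orch m \<notin> e} = chain_edges L \<union> star_edges i m"
    unfolding before using Orch_in_chain_edges Orch_notin_star_edges by fastforce
  then show ?thesis
    unfolding after by auto
qed

lemma measured_chain_nbhd_orch:
  assumes "i \<le> m" "m < k"
  shows "{x. {Orch m, x} \<in> measured_chain_edges k i m} = {Client i, Client (Suc m)}"
  using assms by (auto simp: measured_chain_edges_def chain_edges_def star_edges_def doubleton_eq_iff)

lemma measured_chain_nbhd_client: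
  assumes "i \<le> m" "m < k"
  shows "{x. {Client (Suc m), x} \<in> measured_chain_edges k i m} =
           (if Suc m < k then {Orch m, Orch (Suc m)} else {Orch m})"
  using assms by (auto simp: measured_chain_edges_def chain_edges_def star_edges_def doubleton_eq_iff)

lemma measured_chain_no_edge:
  assumes "i \<le> m"
  shows "{Client i, Orch (Suc m)} \<notin> measured_chain_edges k i m"
  using assms by (auto simp: measured_chain_edges_def chain_edges_def star_edges_def doubleton_eq_iff)

lemma edges_meas_x_measured_chain:
  assumes E: "edges H = measured_chain_edges k i m" and "i \<le> m" "m < k"
  shows "edges (meas_x (Orch m) (Client (Suc m)) H) = measured_chain_edges k i (Suc m)"
proof -
  have orch: "nbhd H (Orch m) = {Client i, Client (Suc m)}"
    using measured_chain_nbhd_orch[OF assms(2,3)] by (simp add: nbhd_def E)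
  have client: "nbhd H (Client (Suc m)) = (if Suc m < k then {Orch m, Orch (Suc m)} else {Orch m})"
    using measured_chain_nbhd_client[OF assms(2,3)] by (simp add: nbhd_def E)
  show ?thesis
  proof (cases "Suc m < k")
    case True
    with orch client \<open>i \<le> m\<close> show ?thesis
      by (simp add: edges_meas_x_path_support measured_chain_edges_Suc_inner measured_chain_no_edge E)
  next
    case False
    with orch client \<open>i \<le> m\<close> \<open>m < k\<close> show ?thesis
      by (simp add: edges_meas_x_leaf_support measured_chain_edges_Suc_last E)
  qed
qed

lemma edges_after_meas:
  assumes "1 \<le> i" "i < k" "i \<le> m" "m \<le> k"
  shows "edges (after_meas k i m) = measured_chain_edges k i m"
  using assms(3,4)
proof (induction m rule: dec_induct)
  case base
  then show ?case
    using assms(1,2) by (simp add: after_meas_def edges_chain_graph)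
next
  case (step n)
  then have "edges (after_meas k i n) = measured_chain_edges k i n"
    by simp
  then show ?case
    using step by (simp add: after_meas_def edges_meas_x_measured_chain)
qed

theorem lemma3:
  fixes k i j :: nat
  assumes "k \<ge> 2" and "1 \<le> i" and "i < j" and "j \<le> k"
  shows "(\<forall>m\<in>{i..<j}. Client (Suc m) \<in> nbhd (after_meas k i m) (Orch m))
         \<and> {Client i, Client j} \<in> edges (after_meas k i j)"
proof
  show "\<forall>m\<in>{i..<j}. Client (Suc m) \<in> nbhd (after_meas k i m) (Orch m)"
  proof
    fix m assume "m \<in> {i..<j}"
    with assms have "i \<le> m" "m < k"
      by auto
    with assms show "Client (Suc m) \<in> nbhd (after_meas k i m) (Orch m)"
      using measured_chain_nbhd_orch by (simp add: nbhd_def edges_after_meas)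
  qed
  have "{Client i, Client j} \<in> star_edges i j"
    using \<open>i < j\<close> by (auto simp: star_edges_def)
  with assms show "{Client i, Client j} \<in> edges (after_meas k i j)"
    by (simp add: edges_after_meas measured_chain_edges_def)
qed

end
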